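(* Let $s\in\mathbb{N}$ and let $\widehat{g}:\mathbb{N}\to\mathbb{C}$ be an arbitrary arithmetical function. Then the following are equivalent: (i) for every $a\in\mathbb{N}$, the series $g(a)=\sum_{r=1}^{\infty}\widehat{g}(r)\,c_r^{s}(a^s)$ converges absolutely; (ii) for every $a\in\mathbb{N}$, the series $\gamma(a)=a^s\sum_{m=1}^{\infty}\widehat{g}(am)\,\mu(m)$ converges absolutely. Moreover, in case of convergence, $\gamma=\mu*g$, i.e. $\gamma(a)=\sum_{d\mid a}\mu(a/d)g(d)$ for all $a\in\mathbb{N}$.
   Context: For $s\in\mathbb{N}$ and integers $a,b$, $(a,b)_s$ denotes the largest $d^s$ with $d\in\mathbb{N}$ such that $d^s\mid a$ and $d^s\mid b$. The Cohen–Ramanujan sum is defined for $r,s\in\mathbb{N}$ and $n\in\mathbb{Z}$ by $$c_r^{s}(n)=\sum_{\substack{h=1\\ (h,r^s)_s=1}}^{r^s} e^{2\pi i n h/r^s}.$$ $\mu$ is the Möbius function and $*$ denotes Dirichlet convolution. *)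

theory Defs
  imports Complex_Main "HOL-Computational_Algebra.Squarefree" "HOL-Computational_Algebra.Primes"
begin

definition gcd_pow :: "nat \<Rightarrow> nat \<Rightarrow> nat \<Rightarrow> nat" where
  "gcd_pow s a b = Max {d ^ s | d. d ^ s dvd a \<and> d ^ s dvd b}"

definition cohen_ramanujan :: "nat \<Rightarrow> nat \<Rightarrow> int \<Rightarrow> complex" where
  "cohen_ramanujan s r n =
     (\<Sum>h \<in> {h. 1 \<le> h \<and> h \<le> r ^ s \<and> gcd_pow s h (r ^ s) = 1}.
        exp (2 * of_real pi * \<i> * of_int n * of_nat h / of_nat (r ^ s)))"

text \<open>Moebius function (mu 0 = 0 by convention; only used at positive arguments).\<close>
definition mu :: "nat \<Rightarrow> int" where
  "mu n = (if n = 0 then 0 else if squarefree n then (-1) ^ card (prime_factors n) else 0)"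

end

theory Submission
  imports Defs "HOL-Analysis.Complex_Transcendental"
begin

(* The indicator of the condition (h, r^s)_s = 1 is the sum of mu(d) over the d | r with
   d^s | h. Inserting this into the definition and evaluating the complete exponential sums
   gives c_r^s(b^s) = sum of mu(r/e) e^s over the common divisors e of b and r, and Moebius
   inversion in b turns this into
     sum_{b | a} mu(a/b) c_r^s(b^s) = mu(r/a) a^s if a | r, and 0 otherwise.
   Multiplying by ghat(r) and summing over r, only the multiples r = a m survive, which gives
   a^s sum_m ghat(a m) mu(m). The same two identities, with |mu| <= 1, bound the terms of each
   series by finitely many terms of the other kind, so absolute convergence transfers in both
   directions. *)

section \<open>Sums of the Moebius function\<close>

lemma sum_Pow_minus_one_power_card:
  assumes "finite S"
  shows "(\<Sum>T\<in>Pow S. (-1) ^ card T :: 'a :: ring_1) = (if S = {} then 1 else 0)"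
proof (cases "S = {}")
  case False
  then have "card {T. T \<subseteq> S \<and> {} \<subseteq> T \<and> even (card T)}
      = card {T. T \<subseteq> S \<and> {} \<subseteq> T \<and> odd (card T)}"
    using card_subsupersets_even_odd[OF assms] by blast
  then show ?thesis
    using False assms by (subst sum_alternating_cancels) (auto simp: Pow_def)
qed simp

lemma multiplicity_prod_primes:
  fixes S :: "nat set"
  assumes "finite S" "\<And>q. q \<in> S \<Longrightarrow> prime q" "prime p"
  shows "multiplicity p (\<Prod>S) = (if p \<in> S then 1 else 0)"
  using multiplicity_prod_prime_powers[OF assms, of "\<lambda>_. 1"] by simp

lemma prod_primes_nonzero:
  fixes S :: "nat set"
  assumes "\<And>q. q \<in> S \<Longrightarrow> prime q"
  shows "\<Prod>S \<noteq> 0"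
proof -
  have "0 \<notin> S" using assms not_prime_0 by blast
  then show ?thesis by (cases "finite S") auto
qed

lemma squarefree_prod_primes:
  fixes S :: "nat set"
  assumes "finite S" "\<And>q. q \<in> S \<Longrightarrow> prime q"
  shows "squarefree (\<Prod>S)"
  using assms by (simp add: squarefree_factorial_semiring''[OF prod_primes_nonzero] multiplicity_prod_primes)

lemma prime_factors_prod_primes:
  fixes S :: "nat set"
  assumes "finite S" "\<And>q. q \<in> S \<Longrightarrow> prime q"
  shows "prime_factors (\<Prod>S) = S"
  using assms by (auto simp: prime_factors_multiplicity multiplicity_prod_primes prod_primes_nonzero
      split: if_splits)

lemma prod_prime_factors_squarefree:
  fixes d :: nat
  assumes "squarefree d"
  shows "\<Prod>(prime_factors d) = d"
proof -
  have "d \<noteq> 0" using assms by (metis not_squarefree_0)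
  then have "(\<Prod>p\<in>prime_factors d. p ^ multiplicity p d) = d"
    using prod_prime_factors[of d] by simp
  moreover have "(\<Prod>p\<in>prime_factors d. p ^ multiplicity p d) = \<Prod>(prime_factors d)"
    using assms \<open>d \<noteq> 0\<close> by (intro prod.cong) (auto simp: squarefree_factorial_semiring')
  ultimately show ?thesis by simp
qed

lemma bij_betw_prime_factors_squarefree_divisors:
  fixes n :: nat
  assumes "n > 0"
  shows "bij_betw prime_factors {d. d dvd n \<and> squarefree d} (Pow (prime_factors n))"
proof (rule bij_betw_byWitness[where f' = Prod])
  have "\<Prod>S dvd n" if "S \<subseteq> prime_factors n" for S
  proof (rule multiplicity_le_imp_dvd)
    have "finite S" using that finite_subset by blast
    show "\<Prod>S \<noteq> 0" using that by (intro prod_primes_nonzero) auto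
    show "multiplicity p (\<Prod>S) \<le> multiplicity p n" if "prime p" for p
      using \<open>finite S\<close> \<open>S \<subseteq> prime_factors n\<close> \<open>prime p\<close>
      by (subst multiplicity_prod_primes) (auto simp: prime_factors_multiplicity)
  qed
  then show "Prod ` Pow (prime_factors n) \<subseteq> {d. d dvd n \<and> squarefree d}"
    by (auto intro!: squarefree_prod_primes dest: finite_subset)
  show "\<forall>S\<in>Pow (prime_factors n). prime_factors (\<Prod>S) = S"
    by (auto intro!: prime_factors_prod_primes dest: finite_subset)
  show "\<forall>d\<in>{d. d dvd n \<and> squarefree d}. \<Prod>(prime_factors d) = d"
    by (auto intro: prod_prime_factors_squarefree)
  show "prime_factors ` {d. d dvd n \<and> squarefree d} \<subseteq> Pow (prime_factors n)"
    using assms dvd_prime_factors[of n] by auto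
qed

lemma sum_mu_divisors:
  assumes "n > 0"
  shows "(\<Sum>d | d dvd n. mu d) = (if n = 1 then 1 else 0)"
proof -
  have "(\<Sum>d | d dvd n. mu d) = (\<Sum>d | d dvd n \<and> squarefree d. (-1) ^ card (prime_factors d))"
    by (rule sum.mono_neutral_cong_right) (use assms in \<open>auto simp: mu_def\<close>)
  also have "\<dots> = (\<Sum>T\<in>Pow (prime_factors n). (-1) ^ card T)"
    by (rule sum.reindex_bij_betw[OF bij_betw_prime_factors_squarefree_divisors[OF assms]])
  also have "\<dots> = (if n = 1 then 1 else 0)"
    using assms by (simp add: sum_Pow_minus_one_power_card prime_factorization_empty_iff)
  finally show ?thesis .
qed

lemma abs_mu_le_1: "\<bar>mu n\<bar> \<le> 1"
  by (simp add: mu_def power_abs)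

lemma sum_divisors_swap_cofactor:
  fixes n :: nat
  assumes "n > 0"
  shows "(\<Sum>d | d dvd n. f d (n div d)) = (\<Sum>d | d dvd n. f (n div d) d)"
  using assms by (intro sum.reindex_bij_witness[of _ "(div) n" "(div) n"]) (auto elim: dvdE)

lemma sum_mu_cofactors_of_multiples:
  assumes "a > 0" "e dvd a"
  shows "(\<Sum>b | b dvd a \<and> e dvd b. mu (a div b)) = (if e = a then 1 else 0)"
proof -
  obtain t where t: "a = e * t" using assms(2) by blast
  then have "e > 0" "t > 0" using assms(1) by auto
  have "(\<Sum>b | b dvd a \<and> e dvd b. mu (a div b)) = (\<Sum>c | c dvd t. mu (t div c))"
    using \<open>e > 0\<close> t
    by (intro sum.reindex_bij_witness[of _ "(*) e" "\<lambda>b. b div e"]) (auto elim!: dvdE)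
  also have "\<dots> = (if t = 1 then 1 else 0)"
    using \<open>t > 0\<close> sum_divisors_swap_cofactor[of t "\<lambda>_ c. mu c"] by (simp add: sum_mu_divisors)
  finally show ?thesis using t \<open>e > 0\<close> by auto
qed

lemma mobius_inversion:
  fixes f :: "nat \<Rightarrow> 'a :: comm_ring_1"
  assumes "a > 0"
  shows "(\<Sum>b | b dvd a. of_int (mu (a div b)) * (\<Sum>e | e dvd b. f e)) = f a"
proof -
  define D where "D = {d. d dvd a}"
  have fin: "finite D" using assms by (simp add: D_def)
  have "(\<Sum>b | b dvd a. of_int (mu (a div b)) * (\<Sum>e | e dvd b. f e))
      = (\<Sum>b\<in>D. \<Sum>e\<in>{e\<in>D. e dvd b}. of_int (mu (a div b)) * f e)"
    unfolding D_def sum_distrib_left by (intro sum.cong refl) (auto intro: dvd_trans)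
  also have "\<dots> = (\<Sum>e\<in>D. of_int (\<Sum>b\<in>{b\<in>D. e dvd b}. mu (a div b)) * f e)"
    by (subst sum.swap_restrict[OF fin fin]) (simp add: sum_distrib_right)
  also have "\<dots> = (\<Sum>e\<in>D. if e = a then f e else 0)"
    using assms by (intro sum.cong refl) (simp add: D_def sum_mu_cofactors_of_multiples del: of_int_sum)
  also have "\<dots> = f a"
    using fin by (simp add: D_def)
  finally show ?thesis .
qed

section \<open>The condition (h, r^s)_s = 1\<close>

lemma gcd_pow_eq_1_iff:
  assumes "s > 0" "h > 0"
  shows "gcd_pow s h (r ^ s) = 1 \<longleftrightarrow> (\<forall>d. d dvd r \<and> d ^ s dvd h \<longrightarrow> d = 1)"
proof -
  define A where "A = {d ^ s | d. d ^ s dvd h \<and> d ^ s dvd r ^ s}"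
  have "A \<subseteq> {..h}"
    unfolding A_def using assms(2) by (auto dest: dvd_imp_le)
  then have "finite A" by (rule finite_subset) simp
  moreover have "1 \<in> A"
    unfolding A_def by (rule CollectI, rule exI[of _ 1]) simp
  ultimately have "1 \<le> Max A" "Max A \<le> 1 \<longleftrightarrow> (\<forall>x\<in>A. x \<le> 1)"
    by (rule Max_ge, intro Max_le_iff) auto
  then have "gcd_pow s h (r ^ s) = 1 \<longleftrightarrow> (\<forall>x\<in>A. x \<le> 1)"
    unfolding gcd_pow_def A_def[symmetric] by linarith
  also have "\<dots> \<longleftrightarrow> (\<forall>d. d dvd r \<and> d ^ s dvd h \<longrightarrow> d = 1)"
  proof -
    have "d ^ s \<le> 1 \<longleftrightarrow> d = 1" if "d ^ s dvd h" for d :: nat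
      using that assms is_unit_power_iff le_eq_less_or_eq by auto
    then show ?thesis using assms(1) by (auto simp: A_def)
  qed
  finally show ?thesis .
qed

lemma lcm_power_nat: "lcm (a ^ n) (b ^ n) = lcm a b ^ n" for a b :: nat
proof (cases "gcd a b = 0")
  case False
  have "lcm (a ^ n) (b ^ n) * gcd a b ^ n = (a * b) ^ n"
    using lcm_gcd_prod[of "a ^ n" "b ^ n"] by (simp add: power_mult_distrib)
  also have "\<dots> = lcm a b ^ n * gcd a b ^ n"
    using lcm_gcd_prod[of a b] by (simp add: power_mult_distrib[symmetric])
  finally show ?thesis using False by auto
qed simp

lemma power_divisors_eq_divisors:
  fixes r h :: nat
  assumes "s > 0" "r > 0"
  obtains D where "D > 0" "{d. d dvd r \<and> d ^ s dvd h} = {d. d dvd D}"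
proof -
  define S where "S = {d. d dvd r \<and> d ^ s dvd h}"
  have "finite S" using assms(2) by (simp add: S_def)
  moreover have "1 \<in> S" by (simp add: S_def)
  ultimately have "Max S \<in> S" using Max_in by blast
  then have "Max S > 0" using assms(2) by (auto simp: S_def intro: dvd_pos_nat)
  have lcm_in: "lcm d e \<in> S" if "d \<in> S" "e \<in> S" for d e
    using that by (auto simp: S_def lcm_power_nat[symmetric])
  have "S = {d. d dvd Max S}"
  proof (intro set_eqI iffI)
    fix d assume "d \<in> S"
    then have "d > 0" using assms(2) by (auto simp: S_def intro: dvd_pos_nat)
    have "lcm d (Max S) \<le> Max S"
      using lcm_in \<open>d \<in> S\<close> \<open>Max S \<in> S\<close> \<open>finite S\<close> by simp
    moreover have "Max S \<le> lcm d (Max S)"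
      using \<open>d > 0\<close> \<open>Max S > 0\<close> by (intro dvd_imp_le) (simp_all add: lcm_pos_nat)
    ultimately have "lcm d (Max S) = Max S" by simp
    then show "d \<in> {d. d dvd Max S}" by (metis dvd_lcm1 mem_Collect_eq)
  next
    fix d assume "d \<in> {d. d dvd Max S}"
    then show "d \<in> S"
      using \<open>Max S \<in> S\<close> by (auto simp: S_def intro: dvd_trans dvd_power_same)
  qed
  then show ?thesis using \<open>Max S > 0\<close> that S_def by blast
qed

lemma of_bool_gcd_pow_eq_1_eq_sum_mu:
  assumes "s > 0" "r > 0" "h > 0"
  shows "(of_bool (gcd_pow s h (r ^ s) = 1) :: 'a :: ring_1) = (\<Sum>d | d dvd r \<and> d ^ s dvd h. of_int (mu d))"
proof -
  obtain D where "D > 0" and D: "{d. d dvd r \<and> d ^ s dvd h} = {d. d dvd D}"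
    using power_divisors_eq_divisors[OF assms(1,2)] .
  have "gcd_pow s h (r ^ s) = 1 \<longleftrightarrow> D = 1"
    unfolding gcd_pow_eq_1_iff[OF assms(1,3)] using D by (auto simp: set_eq_iff)
  then show ?thesis
    unfolding D using sum_mu_divisors[OF \<open>D > 0\<close>] by (simp flip: of_int_sum)
qed

section \<open>Cohen-Ramanujan sums\<close>

lemma sum_exp_additive_character:
  fixes n :: int and N :: nat
  assumes "N > 0"
  shows "(\<Sum>j=1..N. exp (2 * of_real pi * \<i> * of_int n * of_nat j / of_nat N))
         = (if int N dvd n then of_nat N else 0)"
proof -
  define \<omega> where "\<omega> = exp (2 * of_real pi * \<i> * of_int n / of_nat N)"
  have powers: "exp (2 * of_real pi * \<i> * of_int n * of_nat j / of_nat N) = \<omega> ^ j" for j :: nat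
  proof -
    have "2 * of_real pi * \<i> * of_int n * of_nat j / of_nat N
          = of_nat j * (2 * of_real pi * \<i> * of_int n / of_nat N)" by simp
    then show ?thesis unfolding \<omega>_def by (simp only: exp_of_nat_mult)
  qed
  have "\<omega> ^ N = 1"
    using assms by (simp add: \<omega>_def field_simps flip: exp_of_nat_mult)
  have "\<omega> = 1 \<longleftrightarrow> int N dvd n"
  proof
    assume "\<omega> = 1"
    then obtain m :: int where "2 * pi * of_int n / of_nat N = of_int (2 * m) * pi"
      unfolding \<omega>_def exp_eq_1 by auto
    then have "real_of_int n = of_int (int N * m)" using assms by (simp add: field_simps)
    then show "int N dvd n" by (simp only: of_int_eq_iff) simp
  next
    assume "int N dvd n"
    then obtain k where "n = int N * k" by blast
    then show "\<omega> = 1" using assms by (simp add: \<omega>_def field_simps)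
  qed
  moreover have "(\<Sum>j=1..N. \<omega> ^ j) = 0" if "\<omega> \<noteq> 1"
  proof -
    have "(\<Sum>j=1..N. \<omega> ^ j) = \<omega> * (\<Sum>j<N. \<omega> ^ j)"
      by (simp add: sum.atLeast1_atMost_eq sum_distrib_left)
    also have "\<dots> = 0" using that \<open>\<omega> ^ N = 1\<close> by (simp add: geometric_sum)
    finally show ?thesis .
  qed
  ultimately show ?thesis by (cases "\<omega> = 1") (simp_all add: powers)
qed

lemma sum_exp_multiples:
  fixes n :: int
  assumes "k > 0" "M > 0"
  shows "(\<Sum>h | h \<in> {1..k * M} \<and> k dvd h. exp (2 * of_real pi * \<i> * of_int n * of_nat h / of_nat (k * M)))
         = (if int M dvd n then of_nat M else 0)"
proof -
  have "inj_on ((*) k) {1..M}" using assms by (simp add: inj_on_def)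
  moreover have "{h. h \<in> {1..k * M} \<and> k dvd h} = (*) k ` {1..M}"
    using assms by (auto elim!: dvdE intro!: image_eqI)
  moreover have "2 * of_real pi * \<i> * of_int n * of_nat (k * j) / of_nat (k * M)
      = 2 * of_real pi * \<i> * of_int n * of_nat j / (of_nat M :: complex)" for j
    using assms by (simp add: field_simps)
  ultimately have "(\<Sum>h | h \<in> {1..k * M} \<and> k dvd h. exp (2 * of_real pi * \<i> * of_int n * of_nat h / of_nat (k * M)))
      = (\<Sum>j=1..M. exp (2 * of_real pi * \<i> * of_int n * of_nat j / of_nat M))"
    by (intro sum.reindex_cong) auto
  also have "\<dots> = (if int M dvd n then of_nat M else 0)"
    using assms(2) by (rule sum_exp_additive_character)
  finally show ?thesis .
qed

lemma cohen_ramanujan_eq_sum_mu: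
  assumes "s > 0" "r > 0"
  shows "cohen_ramanujan s r n
         = (\<Sum>e | e dvd r. of_int (mu (r div e)) * (if int (e ^ s) dvd n then of_nat (e ^ s) else 0))"
proof -
  define H where "H = {1..r ^ s}"
  define D where "D = {d. d dvd r}"
  define E where "E h = exp (2 * of_real pi * \<i> * of_int n * of_nat h / of_nat (r ^ s))" for h :: nat
  have "finite D" using assms(2) by (simp add: D_def)
  have "cohen_ramanujan s r n = (\<Sum>h\<in>{h\<in>H. gcd_pow s h (r ^ s) = 1}. E h)"
    unfolding cohen_ramanujan_def E_def H_def by (intro sum.cong) auto
  also have "\<dots> = (\<Sum>h\<in>H. if gcd_pow s h (r ^ s) = 1 then E h else 0)"
    by (rule sum.inter_filter) (simp add: H_def)
  also have "\<dots> = (\<Sum>h\<in>H. of_bool (gcd_pow s h (r ^ s) = 1) * E h)"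
    by (intro sum.cong) auto
  also have "\<dots> = (\<Sum>h\<in>H. (\<Sum>d\<in>{d\<in>D. d ^ s dvd h}. of_int (mu d)) * E h)"
  proof (intro sum.cong refl arg_cong2[where f = "(*)"])
    fix h assume "h \<in> H"
    then show "of_bool (gcd_pow s h (r ^ s) = 1) = (\<Sum>d\<in>{d\<in>D. d ^ s dvd h}. of_int (mu d))"
      using of_bool_gcd_pow_eq_1_eq_sum_mu[OF assms, of h] by (simp add: H_def D_def)
  qed
  also have "\<dots> = (\<Sum>d\<in>D. \<Sum>h\<in>{h\<in>H. d ^ s dvd h}. of_int (mu d) * E h)"
    unfolding sum_distrib_right by (rule sum.swap_restrict) (simp_all add: H_def \<open>finite D\<close>)
  also have "\<dots> = (\<Sum>d\<in>D. of_int (mu d) * (\<Sum>h | h \<in> H \<and> d ^ s dvd h. E h))"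
    by (simp add: sum_distrib_left)
  also have "\<dots> = (\<Sum>d\<in>D. of_int (mu d) *
                    (if int ((r div d) ^ s) dvd n then of_nat ((r div d) ^ s) else 0))"
  proof (intro sum.cong refl arg_cong2[where f = "(*)"])
    fix d assume "d \<in> D"
    then have "r ^ s = d ^ s * (r div d) ^ s" "d > 0" "r div d > 0"
      using assms(2) by (auto simp: D_def power_mult_distrib[symmetric] elim!: dvdE)
    then show "(\<Sum>h | h \<in> H \<and> d ^ s dvd h. E h)
          = (if int ((r div d) ^ s) dvd n then of_nat ((r div d) ^ s) else 0)"
      unfolding H_def E_def using sum_exp_multiples[of "d ^ s" "(r div d) ^ s" n] by simp
  qed
  also have "\<dots> = (\<Sum>e | e dvd r. of_int (mu (r div e)) * (if int (e ^ s) dvd n then of_nat (e ^ s) else 0))"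
    unfolding D_def using sum_divisors_swap_cofactor[OF assms(2),
      of "\<lambda>d e. of_int (mu d) * (if int (e ^ s) dvd n then of_nat (e ^ s) else 0)"] .
  finally show ?thesis .
qed

lemma cohen_ramanujan_power:
  assumes "s > 0" "r > 0" "b > 0"
  shows "cohen_ramanujan s r (int b ^ s)
         = (\<Sum>e | e dvd b. if e dvd r then of_int (mu (r div e)) * of_nat e ^ s else 0)"
proof -
  define g where "g e = (of_int (mu (r div e)) * of_nat e ^ s :: complex)" for e
  have "cohen_ramanujan s r (int b ^ s) = (\<Sum>e | e dvd r. if e dvd b then g e else 0)"
    unfolding cohen_ramanujan_eq_sum_mu[OF assms(1,2)] g_def
    using assms(1) by (intro sum.cong refl) (simp flip: of_nat_power add: of_nat_dvd_iff)
  also have "\<dots> = (\<Sum>e | e dvd r \<and> e dvd b. g e)"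
    using sum.inter_filter[of "{e. e dvd r}" g "\<lambda>e. e dvd b"] assms(2) by simp
  also have "\<dots> = (\<Sum>e | e dvd b. if e dvd r then g e else 0)"
    using sum.inter_filter[of "{e. e dvd b}" g "\<lambda>e. e dvd r"] assms(3) by (simp add: conj_commute)
  finally show ?thesis unfolding g_def .
qed

lemma sum_mu_cohen_ramanujan_power:
  assumes "s > 0" "r > 0" "a > 0"
  shows "(\<Sum>b | b dvd a. of_int (mu (a div b)) * cohen_ramanujan s r (int b ^ s))
         = (if a dvd r then of_int (mu (r div a)) * of_nat a ^ s else 0)"
proof -
  have "(\<Sum>b | b dvd a. of_int (mu (a div b)) * cohen_ramanujan s r (int b ^ s))
      = (\<Sum>b | b dvd a. of_int (mu (a div b)) *
           (\<Sum>e | e dvd b. if e dvd r then of_int (mu (r div e)) * of_nat e ^ s else 0))"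
    using assms by (intro sum.cong refl) (simp add: cohen_ramanujan_power dvd_pos_nat)
  also have "\<dots> = (if a dvd r then of_int (mu (r div a)) * of_nat a ^ s else 0)"
    using assms(3) by (rule mobius_inversion)
  finally show ?thesis .
qed

lemma norm_cohen_ramanujan_power_le:
  assumes "s > 0" "r > 0" "a > 0"
  shows "norm (cohen_ramanujan s r (int a ^ s))
         \<le> (\<Sum>e | e dvd a. if e dvd r then \<bar>real_of_int (mu (r div e))\<bar> * real e ^ s else 0)"
  unfolding cohen_ramanujan_power[OF assms]
  by (rule order.trans[OF norm_sum], rule sum_mono) (simp add: norm_mult norm_power)

section \<open>Series along multiples\<close>

(* A series indexed from 0 stands for a sum over r >= 1 (term n belongs to r = Suc n), so the
   terms at the multiples r = a * Suc m sit at the indices a * Suc m - 1. *)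
lemma sums_multiples_iff:
  fixes f :: "nat \<Rightarrow> 'a :: {t2_space, comm_monoid_add}"
  assumes "a > 0" "\<And>n. \<not> a dvd Suc n \<Longrightarrow> f n = 0"
  shows "(\<lambda>m. f (a * Suc m - 1)) sums c \<longleftrightarrow> f sums c"
proof (rule sums_mono_reindex)
  show "strict_mono (\<lambda>m. a * Suc m - 1)"
    using assms(1) by (auto simp: strict_mono_Suc_iff algebra_simps)
  show "f n = 0" if "n \<notin> range (\<lambda>m. a * Suc m - 1)" for n
  proof (rule assms(2), rule notI)
    assume "a dvd Suc n"
    then obtain k where "Suc n = a * k" by blast
    then have "n = a * Suc (k - 1) - 1" by (cases k) auto
    then show False using that by blast
  qed
qed

lemma summable_multiples_iff:
  fixes f :: "nat \<Rightarrow> 'a :: {t2_space, comm_monoid_add}"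
  assumes "a > 0" "\<And>n. \<not> a dvd Suc n \<Longrightarrow> f n = 0"
  shows "summable (\<lambda>m. f (a * Suc m - 1)) \<longleftrightarrow> summable f"
  using sums_multiples_iff[of a f, OF assms] by (simp add: summable_def)

lemma summable_norm_mu_series:
  fixes ghat :: "nat \<Rightarrow> complex"
  assumes "s > 0" "a > 0"
    and summable_cr: "\<And>b. b dvd a \<Longrightarrow>
           summable (\<lambda>r. norm (ghat (Suc r) * cohen_ramanujan s (Suc r) (int b ^ s)))"
  shows "summable (\<lambda>m. norm (ghat (a * Suc m) * of_int (mu (Suc m))))"
proof -
  define G where "G r = (if a dvd Suc r then
      \<Sum>b | b dvd a. norm (ghat (Suc r) * cohen_ramanujan s (Suc r) (int b ^ s)) else 0)" for r
  have "summable (\<lambda>r. \<Sum>b | b dvd a. norm (ghat (Suc r) * cohen_ramanujan s (Suc r) (int b ^ s)))"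
    using summable_cr by (rule summable_sum) simp
  then have "summable G"
    by (rule summable_comparison_test[rotated]) (auto simp: G_def intro!: sum_nonneg)
  then have "summable (\<lambda>m. G (a * Suc m - 1))"
    by (rule summable_multiples_iff[OF assms(2), THEN iffD2, rotated]) (simp add: G_def)
  have bound: "norm (ghat (a * Suc m) * of_int (mu (Suc m))) \<le> G (a * Suc m - 1)" for m
  proof -
    define N where "N = a * Suc m"
    have "N > 0" "a dvd N" "N div a = Suc m" "Suc (a * Suc m - 1) = N"
      using assms(2) by (simp_all add: N_def)
    have "norm (ghat N * of_int (mu (Suc m))) \<le> real a ^ s * norm (ghat N * of_int (mu (Suc m)))"
      using assms(2) by (simp add: mult_le_cancel_right1 one_le_power)
    also have "\<dots> = norm (ghat N * (\<Sum>b | b dvd a. of_int (mu (a div b)) * cohen_ramanujan s N (int b ^ s)))"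
      using \<open>a dvd N\<close> \<open>N div a = Suc m\<close>
      by (simp add: sum_mu_cohen_ramanujan_power[OF assms(1) \<open>N > 0\<close> assms(2)] norm_mult norm_power)
    also have "\<dots> \<le> (\<Sum>b | b dvd a. \<bar>real_of_int (mu (a div b))\<bar> * norm (ghat N * cohen_ramanujan s N (int b ^ s)))"
      unfolding sum_distrib_left
      by (rule order.trans[OF norm_sum], rule sum_mono) (simp add: norm_mult)
    also have "\<dots> \<le> (\<Sum>b | b dvd a. norm (ghat N * cohen_ramanujan s N (int b ^ s)))"
      by (intro sum_mono mult_left_le_one_le) (use abs_mu_le_1 in \<open>simp_all flip: of_int_abs\<close>)
    also have "\<dots> = G (a * Suc m - 1)"
      unfolding G_def \<open>Suc (a * Suc m - 1) = N\<close> using \<open>a dvd N\<close> by simp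
    finally show ?thesis by (simp add: N_def)
  qed
  show ?thesis
  proof (rule summable_comparison_test'[where N = 0])
    show "summable (\<lambda>m. G (a * Suc m - 1))" by fact
    show "norm (norm (ghat (a * Suc m) * of_int (mu (Suc m)))) \<le> G (a * Suc m - 1)" for m
      using bound[of m] by (simp only: real_norm_def abs_norm_cancel)
  qed
qed

lemma summable_norm_cohen_ramanujan_series:
  fixes ghat :: "nat \<Rightarrow> complex"
  assumes "s > 0" "a > 0"
    and summable_mu: "\<And>e. e dvd a \<Longrightarrow> summable (\<lambda>m. norm (ghat (e * Suc m) * of_int (mu (Suc m))))"
  shows "summable (\<lambda>r. norm (ghat (Suc r) * cohen_ramanujan s (Suc r) (int a ^ s)))"
proof -
  define K where "K e r = (if e dvd Suc r then
      norm (ghat (Suc r)) * (\<bar>real_of_int (mu (Suc r div e))\<bar> * real e ^ s) else 0)" for e r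
  have "summable (K e)" if "e dvd a" for e
  proof -
    have "e > 0" using that assms(2) by (auto intro: dvd_pos_nat)
    have "K e (e * Suc m - 1) = real e ^ s * norm (ghat (e * Suc m) * of_int (mu (Suc m)))" for m
    proof -
      have "Suc (e * Suc m - 1) = e * Suc m" using \<open>e > 0\<close> by simp
      then show ?thesis using \<open>e > 0\<close> by (simp add: K_def norm_mult)
    qed
    then have "summable (\<lambda>m. K e (e * Suc m - 1))"
      using summable_mu[OF that] by (simp add: summable_mult)
    then show ?thesis
      by (rule summable_multiples_iff[OF \<open>e > 0\<close>, THEN iffD1, rotated]) (simp add: K_def)
  qed
  then have "summable (\<lambda>r. \<Sum>e | e dvd a. K e r)"
    by (rule summable_sum) simp
  have bound: "norm (ghat (Suc r) * cohen_ramanujan s (Suc r) (int a ^ s)) \<le> (\<Sum>e | e dvd a. K e r)" for r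
  proof -
    have "norm (ghat (Suc r) * cohen_ramanujan s (Suc r) (int a ^ s))
        \<le> norm (ghat (Suc r)) * (\<Sum>e | e dvd a. if e dvd Suc r then
             \<bar>real_of_int (mu (Suc r div e))\<bar> * real e ^ s else 0)"
      unfolding norm_mult
      by (intro mult_left_mono norm_cohen_ramanujan_power_le assms) simp_all
    also have "\<dots> = (\<Sum>e | e dvd a. K e r)"
      unfolding K_def sum_distrib_left by (intro sum.cong refl) simp_all
    finally show ?thesis .
  qed
  show ?thesis
  proof (rule summable_comparison_test'[where N = 0])
    show "summable (\<lambda>r. \<Sum>e | e dvd a. K e r)" by fact
    show "norm (norm (ghat (Suc r) * cohen_ramanujan s (Suc r) (int a ^ s))) \<le> (\<Sum>e | e dvd a. K e r)" for r
      using bound[of r] by (simp only: real_norm_def abs_norm_cancel)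
  qed
qed

lemma cohen_ramanujan_series_mobius_inversion:
  fixes ghat :: "nat \<Rightarrow> complex"
  assumes "s > 0" "a > 0"
    and summable_cr: "\<And>d. d dvd a \<Longrightarrow>
           summable (\<lambda>r. ghat (Suc r) * cohen_ramanujan s (Suc r) (int d ^ s))"
  shows "of_nat a ^ s * (\<Sum>m. ghat (a * Suc m) * of_int (mu (Suc m)))
         = (\<Sum>d | d dvd a. of_int (mu (a div d)) * (\<Sum>r. ghat (Suc r) * cohen_ramanujan s (Suc r) (int d ^ s)))"
proof -
  define U where "U r = (if a dvd Suc r then ghat (Suc r) * of_int (mu (Suc r div a)) * of_nat a ^ s else 0)"
    for r
  have U_eq: "(\<Sum>d | d dvd a. of_int (mu (a div d)) * (ghat (Suc r) * cohen_ramanujan s (Suc r) (int d ^ s)))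
      = U r" for r
  proof -
    have "(\<Sum>d | d dvd a. of_int (mu (a div d)) * (ghat (Suc r) * cohen_ramanujan s (Suc r) (int d ^ s)))
        = ghat (Suc r) * (\<Sum>d | d dvd a. of_int (mu (a div d)) * cohen_ramanujan s (Suc r) (int d ^ s))"
      by (simp add: sum_distrib_left ac_simps)
    also have "\<dots> = U r"
      by (simp add: sum_mu_cohen_ramanujan_power[OF assms(1) _ assms(2)] U_def)
    finally show ?thesis .
  qed
  have "(\<lambda>r. \<Sum>d | d dvd a. of_int (mu (a div d)) * (ghat (Suc r) * cohen_ramanujan s (Suc r) (int d ^ s)))
      sums (\<Sum>d | d dvd a. of_int (mu (a div d)) * (\<Sum>r. ghat (Suc r) * cohen_ramanujan s (Suc r) (int d ^ s)))"
    by (intro sums_sum sums_mult summable_sums summable_cr) simp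
  then have "U sums (\<Sum>d | d dvd a. of_int (mu (a div d)) * (\<Sum>r. ghat (Suc r) * cohen_ramanujan s (Suc r) (int d ^ s)))"
    by (simp only: U_eq)
  then have "(\<lambda>m. of_nat a ^ s * (ghat (a * Suc m) * of_int (mu (Suc m)))) sums
      (\<Sum>d | d dvd a. of_int (mu (a div d)) * (\<Sum>r. ghat (Suc r) * cohen_ramanujan s (Suc r) (int d ^ s)))"
    using sums_multiples_iff[OF assms(2), of U] assms(2) by (simp add: U_def ac_simps)
  then have "summable (\<lambda>m. of_nat a ^ s * (ghat (a * Suc m) * of_int (mu (Suc m))))"
    and "(\<Sum>m. of_nat a ^ s * (ghat (a * Suc m) * of_int (mu (Suc m))))
      = (\<Sum>d | d dvd a. of_int (mu (a div d)) * (\<Sum>r. ghat (Suc r) * cohen_ramanujan s (Suc r) (int d ^ s)))"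
    by (simp_all add: sums_iff)
  then show ?thesis
    using assms(2) by (simp add: summable_cmult_iff suminf_mult)
qed

theorem mainTheorem3:
  fixes s :: nat and ghat :: "nat \<Rightarrow> complex"
  assumes "s \<ge> 1"
  shows "((\<forall>a\<ge>1. summable (\<lambda>r. norm (ghat (Suc r) * cohen_ramanujan s (Suc r) (int a ^ s))))
          \<longleftrightarrow>
          (\<forall>a\<ge>1. summable (\<lambda>m. norm (ghat (a * Suc m) * of_int (mu (Suc m))))))
     \<and> ((\<forall>a\<ge>1. summable (\<lambda>r. norm (ghat (Suc r) * cohen_ramanujan s (Suc r) (int a ^ s))))
        \<longrightarrow> (\<forall>a\<ge>1.
              of_nat a ^ s * (\<Sum>m. ghat (a * Suc m) * of_int (mu (Suc m)))
              = (\<Sum>d | d dvd a. of_int (mu (a div d)) *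
                   (\<Sum>r. ghat (Suc r) * cohen_ramanujan s (Suc r) (int d ^ s)))))"
proof -
  have "s > 0" using assms by simp
  have divisor_ge_1: "d \<ge> 1" if "d dvd a" "a \<ge> 1" for a d :: nat
    using that by (simp add: Suc_le_eq dvd_pos_nat)
  define T where "T d r = ghat (Suc r) * cohen_ramanujan s (Suc r) (int d ^ s)" for d r
  define V where "V a m = ghat (a * Suc m) * of_int (mu (Suc m))" for a m
  have "(\<forall>a\<ge>1. summable (\<lambda>r. norm (T a r))) \<longleftrightarrow> (\<forall>a\<ge>1. summable (\<lambda>m. norm (V a m)))"
  proof (intro iffI allI impI)
    fix a :: nat assume "a \<ge> 1" and "\<forall>a\<ge>1. summable (\<lambda>r. norm (T a r))"
    then show "summable (\<lambda>m. norm (V a m))"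
      unfolding T_def V_def using summable_norm_mu_series[OF \<open>s > 0\<close>, of a ghat] divisor_ge_1 by simp
  next
    fix a :: nat assume "a \<ge> 1" and "\<forall>a\<ge>1. summable (\<lambda>m. norm (V a m))"
    then show "summable (\<lambda>r. norm (T a r))"
      unfolding T_def V_def using summable_norm_cohen_ramanujan_series[OF \<open>s > 0\<close>, of a ghat] divisor_ge_1
      by simp
  qed
  moreover have "of_nat a ^ s * (\<Sum>m. V a m) = (\<Sum>d | d dvd a. of_int (mu (a div d)) * (\<Sum>r. T d r))"
    if "\<forall>a\<ge>1. summable (\<lambda>r. norm (T a r))" "a \<ge> 1" for a
  proof -
    have "summable (T d)" if "d dvd a" for d
      using \<open>\<forall>a\<ge>1. summable (\<lambda>r. norm (T a r))\<close> divisor_ge_1[OF that \<open>a \<ge> 1\<close>]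
      by (blast intro: summable_norm_cancel)
    then show ?thesis
      unfolding T_def V_def using \<open>a \<ge> 1\<close>
      by (intro cohen_ramanujan_series_mobius_inversion[OF \<open>s > 0\<close>]) (simp_all add: T_def)
  qed
  ultimately show ?thesis unfolding T_def V_def by blast
qed

end
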